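(* Let $\Lambda$ be a finitely aligned left cancellative small category. Then the set \[F_\Lambda=\Big\{\bigcup_{i=1}^n\alpha_i\beta_i^*\in S_\Lambda^{\mathrm{Iso}}:\ n\ge1,\ \alpha_i,\beta_i\in\Lambda,\ \{\alpha_i\}_{i=1}^n\text{ and }\{\beta_i\}_{i=1}^n\text{ are exhaustive}\Big\}\cup\{0\}\] is an inverse subsemigroup of $S_\Lambda^{\mathrm{Iso}}$.
   Context: $\Lambda$ is a small category (objects $\Lambda^0$, range $r$, source $s$) which is left cancellative and finitely aligned (each $\alpha\Lambda\cap\beta\Lambda$ is a finite union of sets $f\Lambda$, where $\alpha\Lambda=\{\alpha\beta:s(\alpha)=r(\beta)\}$). Each $\alpha\in\Lambda$ is the partial bijection $s(\alpha)\Lambda\to\alpha\Lambda$, $\beta\mapsto\alpha\beta$, in the symmetric inverse monoid $\mathcal{I}(\Lambda)$ (composition on largest domain, zero = empty map), with inverse $\alpha^*$; $S_\Lambda$ is the inverse subsemigroup generated by these, and $\bigcup$ denotes union of partial maps. $S_\Lambda^{\mathrm{Iso}}=\{s\in S_\Lambda:ses^*e\neq0\text{ for every idempotent }0\neq e\leqslant s^*s\}$ (with $e\leqslant f$ iff $ef=e$); it is an inverse subsemigroup. For $x\in\Lambda^0$, a set $B\subseteq x\Lambda$ is exhaustive (at $x$) if for every $\alpha\in x\Lambda$ there is $\beta\in B$ with $\alpha\Lambda\cap\beta\Lambda\neq\emptyset$; "exhaustive" means exhaustive at some $x\in\Lambda^0$. *)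

theory Defs
  imports Main
begin

text \<open>A small category is given by its set of morphisms L, its set of objects Obj
  (identified with the identity morphisms), range r, source s and composition cmp
  (cmp a b = a b, defined when s a = r b).  Partial bijections of L are represented
  as relations (graphs); the product st of the symmetric inverse monoid (first t, then s)
  is t O s, the inverse is the converse relation and the zero is the empty relation.\<close>

definition small_category ::
  "'a set \<Rightarrow> 'a set \<Rightarrow> ('a \<Rightarrow> 'a) \<Rightarrow> ('a \<Rightarrow> 'a) \<Rightarrow> ('a \<Rightarrow> 'a \<Rightarrow> 'a) \<Rightarrow> bool" where
  "small_category L Obj r s cmp \<longleftrightarrow>
     Obj \<subseteq> L \<and>
     (\<forall>a\<in>L. r a \<in> Obj \<and> s a \<in> Obj) \<and>
     (\<forall>x\<in>Obj. r x = x \<and> s x = x) \<and>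
     (\<forall>a\<in>L. \<forall>b\<in>L. s a = r b \<longrightarrow>
        cmp a b \<in> L \<and> r (cmp a b) = r a \<and> s (cmp a b) = s b) \<and>
     (\<forall>a\<in>L. cmp (r a) a = a \<and> cmp a (s a) = a) \<and>
     (\<forall>a\<in>L. \<forall>b\<in>L. \<forall>c\<in>L. s a = r b \<longrightarrow> s b = r c \<longrightarrow>
        cmp (cmp a b) c = cmp a (cmp b c))"

definition left_cancellative ::
  "'a set \<Rightarrow> ('a \<Rightarrow> 'a) \<Rightarrow> ('a \<Rightarrow> 'a) \<Rightarrow> ('a \<Rightarrow> 'a \<Rightarrow> 'a) \<Rightarrow> bool" where
  "left_cancellative L r s cmp \<longleftrightarrow>
     (\<forall>a\<in>L. \<forall>b\<in>L. \<forall>c\<in>L. s a = r b \<longrightarrow> s a = r c \<longrightarrow> cmp a b = cmp a c \<longrightarrow> b = c)"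

definition right_ideal ::
  "'a set \<Rightarrow> ('a \<Rightarrow> 'a) \<Rightarrow> ('a \<Rightarrow> 'a) \<Rightarrow> ('a \<Rightarrow> 'a \<Rightarrow> 'a) \<Rightarrow> 'a \<Rightarrow> 'a set" where
  "right_ideal L r s cmp a = {cmp a b | b. b \<in> L \<and> s a = r b}"

definition finitely_aligned ::
  "'a set \<Rightarrow> ('a \<Rightarrow> 'a) \<Rightarrow> ('a \<Rightarrow> 'a) \<Rightarrow> ('a \<Rightarrow> 'a \<Rightarrow> 'a) \<Rightarrow> bool" where
  "finitely_aligned L r s cmp \<longleftrightarrow>
     (\<forall>a\<in>L. \<forall>b\<in>L. \<exists>G. finite G \<and> G \<subseteq> L \<and>
        right_ideal L r s cmp a \<inter> right_ideal L r s cmp b = (\<Union>f\<in>G. right_ideal L r s cmp f))"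

definition mor ::
  "'a set \<Rightarrow> ('a \<Rightarrow> 'a) \<Rightarrow> ('a \<Rightarrow> 'a) \<Rightarrow> ('a \<Rightarrow> 'a \<Rightarrow> 'a) \<Rightarrow> 'a \<Rightarrow> 'a rel" where
  "mor L r s cmp a = {(b, cmp a b) | b. b \<in> L \<and> r b = s a}"

definition pmult :: "'a rel \<Rightarrow> 'a rel \<Rightarrow> 'a rel" where
  "pmult f g = g O f"

inductive_set S_Lambda ::
  "'a set \<Rightarrow> ('a \<Rightarrow> 'a) \<Rightarrow> ('a \<Rightarrow> 'a) \<Rightarrow> ('a \<Rightarrow> 'a \<Rightarrow> 'a) \<Rightarrow> 'a rel set"
  for L r s cmp where
  gen: "a \<in> L \<Longrightarrow> mor L r s cmp a \<in> S_Lambda L r s cmp"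
| zero: "{} \<in> S_Lambda L r s cmp"
| inv: "f \<in> S_Lambda L r s cmp \<Longrightarrow> converse f \<in> S_Lambda L r s cmp"
| mult: "f \<in> S_Lambda L r s cmp \<Longrightarrow> g \<in> S_Lambda L r s cmp \<Longrightarrow> pmult f g \<in> S_Lambda L r s cmp"

definition S_Iso ::
  "'a set \<Rightarrow> ('a \<Rightarrow> 'a) \<Rightarrow> ('a \<Rightarrow> 'a) \<Rightarrow> ('a \<Rightarrow> 'a \<Rightarrow> 'a) \<Rightarrow> 'a rel set" where
  "S_Iso L r s cmp = {u \<in> S_Lambda L r s cmp.
     \<forall>e \<in> S_Lambda L r s cmp. pmult e e = e \<longrightarrow> e \<noteq> {} \<longrightarrow>
        pmult e (pmult (converse u) u) = e \<longrightarrow>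
        pmult (pmult (pmult u e) (converse u)) e \<noteq> {}}"

definition obj_slice :: "'a set \<Rightarrow> ('a \<Rightarrow> 'a) \<Rightarrow> 'a \<Rightarrow> 'a set" where
  "obj_slice L r x = {a \<in> L. r a = x}"

definition exhaustive_at ::
  "'a set \<Rightarrow> ('a \<Rightarrow> 'a) \<Rightarrow> ('a \<Rightarrow> 'a) \<Rightarrow> ('a \<Rightarrow> 'a \<Rightarrow> 'a) \<Rightarrow> 'a \<Rightarrow> 'a set \<Rightarrow> bool" where
  "exhaustive_at L r s cmp x B \<longleftrightarrow> B \<subseteq> obj_slice L r x \<and>
     (\<forall>a \<in> obj_slice L r x. \<exists>b \<in> B.
        right_ideal L r s cmp a \<inter> right_ideal L r s cmp b \<noteq> {})"

definition exhaustive ::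
  "'a set \<Rightarrow> 'a set \<Rightarrow> ('a \<Rightarrow> 'a) \<Rightarrow> ('a \<Rightarrow> 'a) \<Rightarrow> ('a \<Rightarrow> 'a \<Rightarrow> 'a) \<Rightarrow> 'a set \<Rightarrow> bool" where
  "exhaustive L Obj r s cmp B \<longleftrightarrow> (\<exists>x\<in>Obj. exhaustive_at L r s cmp x B)"

definition F_Lambda ::
  "'a set \<Rightarrow> 'a set \<Rightarrow> ('a \<Rightarrow> 'a) \<Rightarrow> ('a \<Rightarrow> 'a) \<Rightarrow> ('a \<Rightarrow> 'a \<Rightarrow> 'a) \<Rightarrow> 'a rel set" where
  "F_Lambda L Obj r s cmp =
     {u. \<exists>(n::nat) (al::nat \<Rightarrow> 'a) (be::nat \<Rightarrow> 'a). n \<ge> 1 \<and>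
        (\<forall>i<n. al i \<in> L \<and> be i \<in> L) \<and>
        u = (\<Union>i<n. pmult (mor L r s cmp (al i)) (converse (mor L r s cmp (be i)))) \<and>
        u \<in> S_Iso L r s cmp \<and>
        exhaustive L Obj r s cmp (al ` {..<n}) \<and>
        exhaustive L Obj r s cmp (be ` {..<n})} \<union> {{}}"

definition inverse_subsemigroup :: "'a rel set \<Rightarrow> 'a rel set \<Rightarrow> bool" where
  "inverse_subsemigroup T U \<longleftrightarrow> T \<subseteq> U \<and>
     (\<forall>f\<in>T. \<forall>g\<in>T. pmult f g \<in> T) \<and> (\<forall>f\<in>T. converse f \<in> T)"

end

theory Submission
  imports Defs
begin

(* S_Iso is closed under products and inverses for any inverse semigroup of partial bijections,
   because its idempotents are partial identities Id_on D and these are stable under conjugation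
   and intersection. For F_Lambda the real point is closure under products. By finite alignment and
   left cancellation, (alpha beta^* )(gamma delta^* ) is the union of (alpha p)(delta q)^* over a
   finite set of common extensions beta p = gamma q through which every common extension factors;
   hence a product of finite unions of spans is again one. A span a b^* with s a ~= s b is zero, so
   pairs such as (x, z), or (x, b) and (b, x), may be added to make both families exhaustive for
   free, unless x = z and every morphism of x Lambda has source x. In that case the S_Iso condition
   (a nonzero element meets its own domain) forces all objects involved to coincide, and
   exhaustiveness amounts to density of domains and ranges in x Lambda, which survives products
   because spans commute with right multiplication. *)

section \<open>Inverse semigroups of partial bijections\<close>

definition iso_part :: "'a rel set \<Rightarrow> 'a rel set" where
  "iso_part S = {u \<in> S. \<forall>e \<in> S. pmult e e = e \<longrightarrow> e \<noteq> {} \<longrightarrow>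
     pmult e (pmult (converse u) u) = e \<longrightarrow> pmult (pmult (pmult u e) (converse u)) e \<noteq> {}}"

lemma S_Iso_eq_iso_part: "S_Iso L r s cmp = iso_part (S_Lambda L r s cmp)"
  unfolding S_Iso_def iso_part_def ..

lemma pmult_conjugate_Id_on_nonempty_iff:
  "pmult (pmult (pmult u (Id_on D)) (converse u)) (Id_on D) \<noteq> {} \<longleftrightarrow> (\<exists>x\<in>D. \<exists>y\<in>D. (x, y) \<in> u)"
proof
  assume "pmult (pmult (pmult u (Id_on D)) (converse u)) (Id_on D) \<noteq> {}"
  then obtain p where "p \<in> pmult (pmult (pmult u (Id_on D)) (converse u)) (Id_on D)" by blast
  then show "\<exists>x\<in>D. \<exists>y\<in>D. (x, y) \<in> u" unfolding pmult_def by auto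
next
  assume "\<exists>x\<in>D. \<exists>y\<in>D. (x, y) \<in> u"
  then obtain x y where "x \<in> D" "y \<in> D" "(x, y) \<in> u" by blast
  then have "(y, y) \<in> pmult (pmult (pmult u (Id_on D)) (converse u)) (Id_on D)"
    unfolding pmult_def by blast
  then show "pmult (pmult (pmult u (Id_on D)) (converse u)) (Id_on D) \<noteq> {}" by blast
qed

lemma pmult_Id_on_idem: "pmult (Id_on D) (Id_on D) = Id_on D"
  unfolding pmult_def by auto

locale pinj_inverse_semigroup =
  fixes S :: "'a rel set"
  assumes single_valued_mem: "f \<in> S \<Longrightarrow> single_valued f"
    and converse_mem: "f \<in> S \<Longrightarrow> converse f \<in> S"
    and pmult_mem: "f \<in> S \<Longrightarrow> g \<in> S \<Longrightarrow> pmult f g \<in> S"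
begin

lemma single_valued_converse_mem: "f \<in> S \<Longrightarrow> single_valued (converse f)"
  using converse_mem single_valued_mem by blast

lemma idempotent_eq_Id_on:
  assumes "e \<in> S" "pmult e e = e"
  shows "e = Id_on (Domain e)"
proof -
  have ee: "e O e = e" using assms(2) by (simp add: pmult_def)
  have "x = y" if xy: "(x, y) \<in> e" for x y
  proof -
    obtain z where xz: "(x, z) \<in> e" and zy: "(z, y) \<in> e" using xy ee by blast
    have "z = y" using single_valuedD[OF single_valued_mem[OF assms(1)] xz xy] .
    then have "(y, x) \<in> converse e" "(y, y) \<in> converse e" using xy zy by auto
    then show "x = y" using single_valuedD[OF single_valued_converse_mem[OF assms(1)]] by blast
  qed
  then show ?thesis by (auto simp: Id_on_def)
qed

lemma pmult_converse_self:
  "u \<in> S \<Longrightarrow> pmult (converse u) u = Id_on (Domain u)"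
  using single_valued_converse_mem[of u] unfolding pmult_def single_valued_def by auto

lemma Id_on_Domain_mem: "u \<in> S \<Longrightarrow> Id_on (Domain u) \<in> S"
  by (metis pmult_converse_self converse_mem pmult_mem)

lemma Id_on_Image_mem:
  assumes "Id_on D \<in> S" "v \<in> S"
  shows "Id_on (v `` D) \<in> S"
proof -
  have "pmult (pmult v (Id_on D)) (converse v) = Id_on (v `` D)"
    using single_valued_mem[OF assms(2)] unfolding pmult_def single_valued_def by auto
  with assms show ?thesis by (metis converse_mem pmult_mem)
qed

lemma Id_on_Int_mem:
  assumes "Id_on A \<in> S" "Id_on B \<in> S"
  shows "Id_on (A \<inter> B) \<in> S"
proof -
  have "pmult (Id_on A) (Id_on B) = Id_on (A \<inter> B)" unfolding pmult_def by auto
  with pmult_mem[OF assms] show ?thesis by simp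
qed

lemma Id_on_below_Domain_iff:
  assumes "u \<in> S"
  shows "pmult (Id_on D) (pmult (converse u) u) = Id_on D \<longleftrightarrow> D \<subseteq> Domain u"
proof -
  have "pmult (Id_on D) (pmult (converse u) u) = Id_on (D \<inter> Domain u)"
    unfolding pmult_converse_self[OF assms] by (auto simp: pmult_def)
  also have "\<dots> = Id_on D \<longleftrightarrow> D \<inter> Domain u = D"
    by (metis Domain_Id_on)
  also have "\<dots> \<longleftrightarrow> D \<subseteq> Domain u"
    by blast
  finally show ?thesis .
qed

lemma iso_part_subset: "iso_part S \<subseteq> S"
  unfolding iso_part_def by blast

lemma iso_partD:
  assumes "u \<in> iso_part S" "Id_on D \<in> S" "D \<noteq> {}" "D \<subseteq> Domain u"
  shows "\<exists>x\<in>D. \<exists>y\<in>D. (x, y) \<in> u"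
proof -
  have iso: "\<forall>e \<in> S. pmult e e = e \<longrightarrow> e \<noteq> {} \<longrightarrow> pmult e (pmult (converse u) u) = e
      \<longrightarrow> pmult (pmult (pmult u e) (converse u)) e \<noteq> {}"
    using assms(1) by (simp add: iso_part_def)
  have "u \<in> S" using assms(1) iso_part_subset by blast
  have "Id_on D \<noteq> {}" using assms(3) by auto
  then have "pmult (pmult (pmult u (Id_on D)) (converse u)) (Id_on D) \<noteq> {}"
    using iso assms(2) pmult_Id_on_idem Id_on_below_Domain_iff[OF \<open>u \<in> S\<close>, THEN iffD2, OF assms(4)]
    by blast
  then show ?thesis using pmult_conjugate_Id_on_nonempty_iff by blast
qed

lemma iso_partI:
  assumes "u \<in> S"
    and "\<And>D. Id_on D \<in> S \<Longrightarrow> D \<noteq> {} \<Longrightarrow> D \<subseteq> Domain u \<Longrightarrow> \<exists>x\<in>D. \<exists>y\<in>D. (x, y) \<in> u"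
  shows "u \<in> iso_part S"
proof -
  have "pmult (pmult (pmult u e) (converse u)) e \<noteq> {}"
    if "e \<in> S" "pmult e e = e" "e \<noteq> {}" "pmult e (pmult (converse u) u) = e" for e
  proof -
    define D where "D = Domain e"
    have e: "e = Id_on D" unfolding D_def using idempotent_eq_Id_on that(1,2) .
    have "D \<noteq> {}" "D \<subseteq> Domain u" "Id_on D \<in> S"
      using that(1,3,4) Id_on_below_Domain_iff[OF assms(1), of D] unfolding e by auto
    then show ?thesis
      using assms(2) pmult_conjugate_Id_on_nonempty_iff unfolding e by blast
  qed
  then show ?thesis using assms(1) unfolding iso_part_def by blast
qed

lemma iso_part_converse:
  assumes "u \<in> iso_part S"
  shows "converse u \<in> iso_part S"
proof -
  have u: "u \<in> S" using assms iso_part_subset by blast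
  have "\<exists>x\<in>D. \<exists>y\<in>D. (x, y) \<in> converse u"
    if D: "Id_on D \<in> S" "D \<noteq> {}" "D \<subseteq> Domain (converse u)" for D
  proof -
    define D' where "D' = converse u `` D"
    have "Id_on D' \<in> S" unfolding D'_def using Id_on_Image_mem[OF D(1) converse_mem[OF u]] .
    moreover have "D' \<noteq> {}" "D' \<subseteq> Domain u" unfolding D'_def using D(2,3) by auto
    ultimately obtain x y where xy: "x \<in> D'" "y \<in> D'" "(x, y) \<in> u"
      using iso_partD[OF assms] by blast
    obtain z where z: "z \<in> D" "(y, z) \<in> u" using xy(2) D'_def by auto
    obtain z' where z': "z' \<in> D" "(x, z') \<in> u" using xy(1) D'_def by auto
    have "z' = y" using single_valuedD[OF single_valued_mem[OF u] z'(2) xy(3)] .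
    then show ?thesis using z z' by blast
  qed
  with converse_mem[OF u] show ?thesis by (rule iso_partI)
qed

lemma iso_part_pmult:
  assumes "u \<in> iso_part S" "v \<in> iso_part S"
  shows "pmult u v \<in> iso_part S"
proof -
  have u: "u \<in> S" and v: "v \<in> S" using assms iso_part_subset by blast+
  have "\<exists>x\<in>D. \<exists>y\<in>D. (x, y) \<in> pmult u v"
    if D: "Id_on D \<in> S" "D \<noteq> {}" "D \<subseteq> Domain (pmult u v)" for D
  proof -
    have D_uv: "D \<subseteq> Domain (v O u)" using D(3) by (simp add: pmult_def)
    then obtain x y where xy: "x \<in> D" "y \<in> D" "(x, y) \<in> v"
      using iso_partD[OF assms(2) D(1,2)] by blast
    define D' where "D' = D \<inter> v `` D"
    have "Id_on D' \<in> S" unfolding D'_def using D(1) Id_on_Image_mem[OF D(1) v] by (rule Id_on_Int_mem)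
    moreover have "D' \<noteq> {}" using xy unfolding D'_def by blast
    moreover have "D' \<subseteq> Domain u"
    proof
      fix z assume "z \<in> D'"
      then obtain x' where x': "x' \<in> D" "(x', z) \<in> v" unfolding D'_def by blast
      then obtain z' where "(x', z') \<in> v" "z' \<in> Domain u" using D_uv by blast
      then show "z \<in> Domain u" using single_valuedD[OF single_valued_mem[OF v] x'(2)] by blast
    qed
    ultimately obtain z z' where zz: "z \<in> D'" "z' \<in> D'" "(z, z') \<in> u"
      using iso_partD[OF assms(1)] by blast
    then obtain x' where "x' \<in> D" "(x', z) \<in> v" unfolding D'_def by blast
    then show ?thesis using zz unfolding D'_def pmult_def by blast
  qed
  with pmult_mem[OF u v] show ?thesis by (rule iso_partI)
qed

lemma empty_in_iso_part: "{} \<in> S \<Longrightarrow> {} \<in> iso_part S"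
  by (rule iso_partI) auto

lemma iso_part_Domain_Int_Range:
  assumes "u \<in> iso_part S" "u \<noteq> {}"
  shows "Domain u \<inter> Range u \<noteq> {}"
proof -
  have "Id_on (Domain u) \<in> S" using assms(1) iso_part_subset Id_on_Domain_mem by blast
  moreover have "Domain u \<noteq> {}" using assms(2) by auto
  ultimately have "\<exists>x\<in>Domain u. \<exists>y\<in>Domain u. (x, y) \<in> u"
    using iso_partD[OF assms(1)] by blast
  then show ?thesis by blast
qed

end


section \<open>Spans in a finitely aligned left cancellative category\<close>

locale finitely_aligned_lc_category =
  fixes L Obj :: "'a set" and r s :: "'a \<Rightarrow> 'a" and cmp :: "'a \<Rightarrow> 'a \<Rightarrow> 'a"
  assumes small_category: "small_category L Obj r s cmp"
    and left_cancellative: "left_cancellative L r s cmp"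
    and finitely_aligned: "finitely_aligned L r s cmp"
begin

abbreviation "RI \<equiv> right_ideal L r s cmp"
abbreviation "slice \<equiv> obj_slice L r"
text \<open>\<open>span a b\<close> is the element \<open>a b\<^sup>*\<close> of \<open>S_Lambda\<close>; it maps \<open>b z\<close> to \<open>a z\<close>.\<close>
abbreviation "span a b \<equiv> pmult (mor L r s cmp a) (converse (mor L r s cmp b))"
abbreviation "exh \<equiv> exhaustive L Obj r s cmp"
abbreviation "exh_at \<equiv> exhaustive_at L r s cmp"

lemma Obj_subset: "Obj \<subseteq> L"
  and s_mem_Obj: "a \<in> L \<Longrightarrow> s a \<in> Obj"
  and r_Obj: "x \<in> Obj \<Longrightarrow> r x = x"
  and s_Obj: "x \<in> Obj \<Longrightarrow> s x = x"
  and cmp_mem: "a \<in> L \<Longrightarrow> b \<in> L \<Longrightarrow> s a = r b \<Longrightarrow> cmp a b \<in> L"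
  and r_cmp: "a \<in> L \<Longrightarrow> b \<in> L \<Longrightarrow> s a = r b \<Longrightarrow> r (cmp a b) = r a"
  and s_cmp: "a \<in> L \<Longrightarrow> b \<in> L \<Longrightarrow> s a = r b \<Longrightarrow> s (cmp a b) = s b"
  and cmp_r_left: "a \<in> L \<Longrightarrow> cmp (r a) a = a"
  and cmp_s_right: "a \<in> L \<Longrightarrow> cmp a (s a) = a"
  and cmp_assoc: "a \<in> L \<Longrightarrow> b \<in> L \<Longrightarrow> c \<in> L \<Longrightarrow> s a = r b \<Longrightarrow> s b = r c \<Longrightarrow>
      cmp (cmp a b) c = cmp a (cmp b c)"
  using small_category unfolding small_category_def by blast+

lemma cmp_left_cancel:
  "a \<in> L \<Longrightarrow> b \<in> L \<Longrightarrow> c \<in> L \<Longrightarrow> s a = r b \<Longrightarrow> s a = r c \<Longrightarrow> cmp a b = cmp a c \<Longrightarrow> b = c"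
  using left_cancellative unfolding left_cancellative_def by blast

lemma mem_right_ideal: "x \<in> RI a \<longleftrightarrow> (\<exists>b\<in>L. s a = r b \<and> x = cmp a b)"
  unfolding right_ideal_def by blast

lemma mem_right_ideal_self: "a \<in> L \<Longrightarrow> a \<in> RI a"
  unfolding mem_right_ideal by (metis cmp_s_right s_mem_Obj r_Obj Obj_subset subsetD)

lemma cmp_mem_right_ideal:
  assumes "x \<in> RI a" "a \<in> L" "t \<in> L" "s x = r t"
  shows "cmp x t \<in> RI a"
proof -
  obtain b where b: "b \<in> L" "s a = r b" "x = cmp a b" using assms(1) mem_right_ideal by blast
  then have "s b = r t" using assms s_cmp by metis
  then show ?thesis
    unfolding mem_right_ideal using b assms(2,3) cmp_mem r_cmp cmp_assoc by metis
qed

lemma right_ideal_subset_slice: "a \<in> L \<Longrightarrow> RI a \<subseteq> slice (r a)"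
  by (auto simp: obj_slice_def mem_right_ideal cmp_mem r_cmp)

lemma mem_slice_self: "x \<in> Obj \<Longrightarrow> x \<in> slice x"
  unfolding obj_slice_def using Obj_subset r_Obj by auto

lemma mem_span:
  "(x, y) \<in> span a b \<longleftrightarrow> (\<exists>z\<in>L. r z = s a \<and> r z = s b \<and> x = cmp b z \<and> y = cmp a z)"
  unfolding pmult_def mor_def by auto

lemma span_empty: "s a \<noteq> s b \<Longrightarrow> span a b = {}"
  using mem_span by fastforce

lemma converse_span: "converse (span a b) = span b a"
  unfolding pmult_def by (simp add: converse_relcomp)

lemma cancel_through_factor:
  assumes "\<beta> \<in> L" "p \<in> L" "t \<in> L" "z \<in> L" "r p = s \<beta>" "s p = r t" "r z = s \<beta>"
    and "cmp \<beta> z = cmp (cmp \<beta> p) t"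
  shows "z = cmp p t"
proof (rule cmp_left_cancel[OF assms(1,4) cmp_mem[OF assms(2,3,6)]])
  show "s \<beta> = r z" using assms(7) by simp
  show "s \<beta> = r (cmp p t)" using r_cmp[OF assms(2,3,6)] assms(5) by simp
  show "cmp \<beta> z = cmp \<beta> (cmp p t)"
    using assms(8) cmp_assoc[OF assms(1-3) assms(5)[symmetric] assms(6)] by simp
qed

definition covers_common_extensions :: "'a \<Rightarrow> 'a \<Rightarrow> ('a \<times> 'a) set \<Rightarrow> bool" where
  "covers_common_extensions \<beta> \<gamma> C \<longleftrightarrow>
     (\<forall>(p, q)\<in>C. p \<in> L \<and> q \<in> L \<and> r p = s \<beta> \<and> r q = s \<gamma> \<and> cmp \<beta> p = cmp \<gamma> q) \<and>
     (\<forall>z\<in>L. \<forall>w\<in>L. r z = s \<beta> \<longrightarrow> r w = s \<gamma> \<longrightarrow> cmp \<beta> z = cmp \<gamma> w \<longrightarrow>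
        (\<exists>(p, q)\<in>C. \<exists>t\<in>L. r t = s p \<and> z = cmp p t \<and> w = cmp q t))"

lemma covers_common_extensionsD:
  assumes "covers_common_extensions \<beta> \<gamma> C" "(p, q) \<in> C"
  shows "p \<in> L" "q \<in> L" "r p = s \<beta>" "r q = s \<gamma>" "cmp \<beta> p = cmp \<gamma> q"
  using assms unfolding covers_common_extensions_def by auto

lemma common_extension_factors:
  assumes "\<beta> \<in> L" "\<gamma> \<in> L" "G \<subseteq> L" "RI \<beta> \<inter> RI \<gamma> = (\<Union>f\<in>G. RI f)"
    and zw: "z \<in> L" "w \<in> L" "r z = s \<beta>" "r w = s \<gamma>" "cmp \<beta> z = cmp \<gamma> w"
  obtains p q t where "p \<in> L" "q \<in> L" "r p = s \<beta>" "r q = s \<gamma>" "cmp \<beta> p = cmp \<gamma> q"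
    "cmp \<beta> p \<in> G" "t \<in> L" "r t = s p" "z = cmp p t" "w = cmp q t"
proof -
  have "cmp \<beta> z \<in> RI \<beta>" "cmp \<beta> z \<in> RI \<gamma>"
    unfolding mem_right_ideal using zw by (metis, metis)
  then obtain f t where f: "f \<in> G" "t \<in> L" "s f = r t" "cmp \<beta> z = cmp f t"
    using assms(4) mem_right_ideal by blast
  have "f \<in> RI \<beta> \<inter> RI \<gamma>" unfolding assms(4) using f(1) assms(3) mem_right_ideal_self by blast
  then have "f \<in> RI \<beta>" "f \<in> RI \<gamma>" by simp_all
  then obtain p q where pq: "p \<in> L" "q \<in> L" "r p = s \<beta>" "r q = s \<gamma>" "f = cmp \<beta> p" "f = cmp \<gamma> q"
    unfolding mem_right_ideal by (elim bexE conjE) (simp only:)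
  have spt: "s p = r t"
    using f(3) unfolding pq(5) s_cmp[OF assms(1) pq(1) pq(3)[symmetric]] .
  have sqt: "s q = r t"
    using f(3) unfolding pq(6) s_cmp[OF assms(2) pq(2) pq(4)[symmetric]] .
  have "z = cmp p t"
    using cancel_through_factor[OF assms(1) pq(1) f(2) zw(1) pq(3) spt zw(3)] f(4) pq(5) by simp
  moreover have "w = cmp q t"
    using cancel_through_factor[OF assms(2) pq(2) f(2) zw(2) pq(4) sqt zw(4)] f(4) zw(5) pq(6) by simp
  ultimately show ?thesis using that pq f(1,2) spt by metis
qed

lemma finite_cover_of_common_extensions:
  assumes "\<beta> \<in> L" "\<gamma> \<in> L"
  shows "\<exists>C. finite C \<and> covers_common_extensions \<beta> \<gamma> C"
proof -
  have "\<exists>G. finite G \<and> G \<subseteq> L \<and> RI \<beta> \<inter> RI \<gamma> = (\<Union>f\<in>G. RI f)"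
    using finitely_aligned assms unfolding finitely_aligned_def by simp
  then obtain G where G: "finite G" "G \<subseteq> L" "RI \<beta> \<inter> RI \<gamma> = (\<Union>f\<in>G. RI f)"
    by (elim exE conjE)
  define C where "C = {(p, q). p \<in> L \<and> q \<in> L \<and> r p = s \<beta> \<and> r q = s \<gamma> \<and>
      cmp \<beta> p = cmp \<gamma> q \<and> cmp \<beta> p \<in> G}"
  have "inj_on (\<lambda>(p, q). cmp \<beta> p) C"
  proof (rule inj_onI, clarify)
    fix p q p' q' assume "(p, q) \<in> C" "(p', q') \<in> C" "cmp \<beta> p = cmp \<beta> p'"
    then show "p = p' \<and> q = q'"
      unfolding C_def using cmp_left_cancel assms by auto
  qed
  moreover have "(\<lambda>(p, q). cmp \<beta> p) ` C \<subseteq> G" unfolding C_def by auto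
  ultimately have "finite C" using G(1) finite_subset finite_imageD by metis
  moreover have "\<exists>(p, q)\<in>C. \<exists>t\<in>L. r t = s p \<and> z = cmp p t \<and> w = cmp q t"
    if zw: "z \<in> L" "w \<in> L" "r z = s \<beta>" "r w = s \<gamma>" "cmp \<beta> z = cmp \<gamma> w" for z w
  proof -
    obtain p q t where "p \<in> L" "q \<in> L" "r p = s \<beta>" "r q = s \<gamma>" "cmp \<beta> p = cmp \<gamma> q"
      "cmp \<beta> p \<in> G" "t \<in> L" "r t = s p" "z = cmp p t" "w = cmp q t"
      using common_extension_factors[OF assms G(2,3) zw] .
    then show ?thesis unfolding C_def by (intro bexI[of _ "(p, q)"]) auto
  qed
  then have "covers_common_extensions \<beta> \<gamma> C"
    unfolding covers_common_extensions_def C_def by auto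
  ultimately show ?thesis by auto
qed

definition common_ext :: "'a \<Rightarrow> 'a \<Rightarrow> ('a \<times> 'a) set" where
  "common_ext \<beta> \<gamma> = (SOME C. finite C \<and> covers_common_extensions \<beta> \<gamma> C)"

lemma finite_common_ext:
  assumes "\<beta> \<in> L" "\<gamma> \<in> L"
  shows "finite (common_ext \<beta> \<gamma>)"
  using someI_ex[OF finite_cover_of_common_extensions[OF assms]]
  unfolding common_ext_def by (rule conjunct1)

lemma covers_common_ext:
  assumes "\<beta> \<in> L" "\<gamma> \<in> L"
  shows "covers_common_extensions \<beta> \<gamma> (common_ext \<beta> \<gamma>)"
  using someI_ex[OF finite_cover_of_common_extensions[OF assms]]
  unfolding common_ext_def by (rule conjunct2)

lemma mem_span_cmp:
  assumes "\<alpha> \<in> L" "\<delta> \<in> L" "p \<in> L" "q \<in> L" "r p = s \<alpha>" "r q = s \<delta>"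
  shows "(x, y) \<in> span (cmp \<alpha> p) (cmp \<delta> q) \<longleftrightarrow>
    (\<exists>t\<in>L. r t = s p \<and> r t = s q \<and> x = cmp \<delta> (cmp q t) \<and> y = cmp \<alpha> (cmp p t))"
proof -
  have "s (cmp \<alpha> p) = s p" "s (cmp \<delta> q) = s q"
    using s_cmp assms by auto
  moreover have "cmp (cmp \<alpha> p) t = cmp \<alpha> (cmp p t)" "cmp (cmp \<delta> q) t = cmp \<delta> (cmp q t)"
    if "t \<in> L" "r t = s p" "r t = s q" for t
    using cmp_assoc assms that by auto
  ultimately show ?thesis unfolding mem_span by auto
qed

lemma covers_common_extensions_source_eq:
  assumes "\<beta> \<in> L" "\<gamma> \<in> L" "covers_common_extensions \<beta> \<gamma> C" "(p, q) \<in> C"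
  shows "s p = s q"
proof -
  note pq = covers_common_extensionsD[OF assms(3,4)]
  show ?thesis
    using s_cmp[OF assms(1) pq(1) pq(3)[symmetric]] s_cmp[OF assms(2) pq(2) pq(4)[symmetric]] pq(5) by simp
qed

lemma pmult_span_subset:
  assumes L: "\<alpha> \<in> L" "\<beta> \<in> L" "\<gamma> \<in> L" "\<delta> \<in> L" and src: "s \<alpha> = s \<beta>" "s \<gamma> = s \<delta>"
    and C: "covers_common_extensions \<beta> \<gamma> C"
  shows "pmult (span \<alpha> \<beta>) (span \<gamma> \<delta>) \<subseteq> (\<Union>(p, q)\<in>C. span (cmp \<alpha> p) (cmp \<delta> q))"
proof clarify
  fix x y assume "(x, y) \<in> pmult (span \<alpha> \<beta>) (span \<gamma> \<delta>)"
  then obtain m where "(x, m) \<in> span \<gamma> \<delta>" "(m, y) \<in> span \<alpha> \<beta>" unfolding pmult_def by blast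
  then obtain w z where w: "w \<in> L" "r w = s \<gamma>" "x = cmp \<delta> w" "m = cmp \<gamma> w"
    and z: "z \<in> L" "r z = s \<beta>" "m = cmp \<beta> z" "y = cmp \<alpha> z"
    unfolding mem_span by blast
  have "\<exists>(p, q)\<in>C. \<exists>t\<in>L. r t = s p \<and> z = cmp p t \<and> w = cmp q t"
    using C z(1,2) w(1,2) z(3) w(4) unfolding covers_common_extensions_def by simp
  then obtain p q t where pq: "(p, q) \<in> C" "t \<in> L" "r t = s p" "z = cmp p t" "w = cmp q t"
    by blast
  note p = covers_common_extensionsD[OF C pq(1)]
  have "(x, y) \<in> span (cmp \<alpha> p) (cmp \<delta> q)"
    unfolding mem_span_cmp[OF L(1,4) p(1,2) p(3)[folded src(1)] p(4)[unfolded src(2)]]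
    using pq covers_common_extensions_source_eq[OF L(2,3) C pq(1)] w(3) z(4) by auto
  with pq(1) show "(x, y) \<in> (\<Union>(p, q)\<in>C. span (cmp \<alpha> p) (cmp \<delta> q))" by blast
qed

lemma span_cmp_subset_pmult:
  assumes L: "\<alpha> \<in> L" "\<beta> \<in> L" "\<gamma> \<in> L" "\<delta> \<in> L" and src: "s \<alpha> = s \<beta>" "s \<gamma> = s \<delta>"
    and p: "p \<in> L" "q \<in> L" "r p = s \<beta>" "r q = s \<gamma>" "cmp \<beta> p = cmp \<gamma> q"
  shows "span (cmp \<alpha> p) (cmp \<delta> q) \<subseteq> pmult (span \<alpha> \<beta>) (span \<gamma> \<delta>)"
proof clarify
  fix x y assume "(x, y) \<in> span (cmp \<alpha> p) (cmp \<delta> q)"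
  then obtain t where t: "t \<in> L" "r t = s p" "r t = s q" "x = cmp \<delta> (cmp q t)" "y = cmp \<alpha> (cmp p t)"
    unfolding mem_span_cmp[OF L(1,4) p(1,2) p(3)[folded src(1)] p(4)[unfolded src(2)]] by blast
  have pt: "cmp p t \<in> L" "r (cmp p t) = s \<beta>"
    using cmp_mem[OF p(1) t(1)] r_cmp[OF p(1) t(1)] t(2) p(3) by simp_all
  have qt: "cmp q t \<in> L" "r (cmp q t) = s \<gamma>"
    using cmp_mem[OF p(2) t(1)] r_cmp[OF p(2) t(1)] t(3) p(4) by simp_all
  have "cmp \<beta> (cmp p t) = cmp (cmp \<beta> p) t"
    using cmp_assoc[OF L(2) p(1) t(1)] p(3) t(2) by simp
  also have "\<dots> = cmp \<gamma> (cmp q t)"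
    using cmp_assoc[OF L(3) p(2) t(1)] p(4,5) t(3) by simp
  finally have "(x, cmp \<beta> (cmp p t)) \<in> span \<gamma> \<delta>"
    unfolding mem_span using qt src(2) t(4) by auto
  moreover have "(cmp \<beta> (cmp p t), y) \<in> span \<alpha> \<beta>"
    unfolding mem_span using pt src(1) t(5) by auto
  ultimately show "(x, y) \<in> pmult (span \<alpha> \<beta>) (span \<gamma> \<delta>)"
    unfolding pmult_def by blast
qed

lemma span_pmult_span:
  assumes "\<alpha> \<in> L" "\<beta> \<in> L" "\<gamma> \<in> L" "\<delta> \<in> L" "s \<alpha> = s \<beta>" "s \<gamma> = s \<delta>"
    and C: "covers_common_extensions \<beta> \<gamma> C"
  shows "pmult (span \<alpha> \<beta>) (span \<gamma> \<delta>) = (\<Union>(p, q)\<in>C. span (cmp \<alpha> p) (cmp \<delta> q))"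
  using pmult_span_subset[OF assms] span_cmp_subset_pmult[OF assms(1-6) covers_common_extensionsD[OF C]]
  by blast

definition spans :: "('a \<times> 'a) set \<Rightarrow> 'a rel" where
  "spans P = (\<Union>(a, b)\<in>P. span a b)"

text \<open>Pairs with \<open>s \<alpha> \<noteq> s \<beta>\<close> or \<open>s \<gamma> \<noteq> s \<delta>\<close> are skipped: their spans are zero and the
  composites \<open>cmp \<alpha> p\<close>, \<open>cmp \<delta> q\<close> would be meaningless.\<close>
definition pairs_pmult :: "('a \<times> 'a) set \<Rightarrow> ('a \<times> 'a) set \<Rightarrow> ('a \<times> 'a) set" where
  "pairs_pmult P Q = (\<Union>(\<alpha>, \<beta>)\<in>P. \<Union>(\<gamma>, \<delta>)\<in>Q.
     if s \<alpha> = s \<beta> \<and> s \<gamma> = s \<delta> then (\<lambda>(p, q). (cmp \<alpha> p, cmp \<delta> q)) ` common_ext \<beta> \<gamma> else {})"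

lemma spans_pmult:
  assumes "P \<subseteq> L \<times> L" "Q \<subseteq> L \<times> L"
  shows "pmult (spans P) (spans Q) = spans (pairs_pmult P Q)"
proof -
  have "pmult (spans P) (spans Q) = (\<Union>(\<alpha>, \<beta>)\<in>P. \<Union>(\<gamma>, \<delta>)\<in>Q. pmult (span \<alpha> \<beta>) (span \<gamma> \<delta>))"
    unfolding spans_def pmult_def by auto
  also have "\<dots> = (\<Union>(\<alpha>, \<beta>)\<in>P. \<Union>(\<gamma>, \<delta>)\<in>Q.
     if s \<alpha> = s \<beta> \<and> s \<gamma> = s \<delta> then (\<Union>(p, q)\<in>common_ext \<beta> \<gamma>. span (cmp \<alpha> p) (cmp \<delta> q)) else {})"
  proof (rule SUP_cong[OF refl], clarify, rule SUP_cong[OF refl], clarify)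
    fix \<alpha> \<beta> \<gamma> \<delta> assume "(\<alpha>, \<beta>) \<in> P" "(\<gamma>, \<delta>) \<in> Q"
    then have L: "\<alpha> \<in> L" "\<beta> \<in> L" "\<gamma> \<in> L" "\<delta> \<in> L" using assms by auto
    show "pmult (span \<alpha> \<beta>) (span \<gamma> \<delta>) = (if s \<alpha> = s \<beta> \<and> s \<gamma> = s \<delta>
        then \<Union>(p, q)\<in>common_ext \<beta> \<gamma>. span (cmp \<alpha> p) (cmp \<delta> q) else {})"
    proof (cases "s \<alpha> = s \<beta> \<and> s \<gamma> = s \<delta>")
      case True
      then show ?thesis using span_pmult_span[OF L _ _ covers_common_ext[OF L(2,3)]] by simp
    next
      case False
      then show ?thesis using span_empty by (auto simp: pmult_def)
    qed
  qed
  also have "\<dots> = spans (pairs_pmult P Q)"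
    unfolding spans_def pairs_pmult_def by (auto split: if_splits; fastforce)
  finally show ?thesis .
qed

lemma finite_pairs_pmult:
  assumes "finite P" "finite Q" "P \<subseteq> L \<times> L" "Q \<subseteq> L \<times> L"
  shows "finite (pairs_pmult P Q)"
proof -
  have "finite (common_ext \<beta> \<gamma>)" if "(\<alpha>, \<beta>) \<in> P" "(\<gamma>, \<delta>) \<in> Q" for \<alpha> \<beta> \<gamma> \<delta>
    using that assms(3,4) finite_common_ext by blast
  then show ?thesis
    unfolding pairs_pmult_def using assms(1,2) by (auto intro!: finite_UN_I)
qed

lemma pairs_pmult_subset:
  assumes "P \<subseteq> L \<times> L" "Q \<subseteq> L \<times> L" "fst ` P \<subseteq> slice X" "snd ` Q \<subseteq> slice Z"
  shows "fst ` pairs_pmult P Q \<subseteq> slice X" "snd ` pairs_pmult P Q \<subseteq> slice Z"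
proof -
  have "x \<in> slice X \<and> y \<in> slice Z" if xy: "(x, y) \<in> pairs_pmult P Q" for x y
  proof -
    obtain \<alpha> \<beta> \<gamma> \<delta> p q where ab: "(\<alpha>, \<beta>) \<in> P" and gd: "(\<gamma>, \<delta>) \<in> Q"
      and src: "s \<alpha> = s \<beta>" "s \<gamma> = s \<delta>" and pq: "(p, q) \<in> common_ext \<beta> \<gamma>"
      and xy_eq: "x = cmp \<alpha> p" "y = cmp \<delta> q"
      using xy unfolding pairs_pmult_def by (auto split: if_splits)
    have "\<alpha> \<in> slice X" "\<delta> \<in> slice Z" using ab gd assms(3,4) by force+
    then have \<alpha>: "\<alpha> \<in> L" "r \<alpha> = X" and \<delta>: "\<delta> \<in> L" "r \<delta> = Z"
      unfolding obj_slice_def by auto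
    have "\<beta> \<in> L" "\<gamma> \<in> L" using ab gd assms(1,2) by auto
    then have "p \<in> L" "q \<in> L" "s \<alpha> = r p" "s \<delta> = r q"
      using covers_common_extensionsD[OF covers_common_ext pq] src by auto
    then show "x \<in> slice X \<and> y \<in> slice Z"
      unfolding obj_slice_def xy_eq using \<alpha> \<delta> cmp_mem r_cmp by auto
  qed
  then show "fst ` pairs_pmult P Q \<subseteq> slice X" "snd ` pairs_pmult P Q \<subseteq> slice Z"
    by auto
qed

lemma converse_spans: "converse (spans P) = spans (prod.swap ` P)"
proof -
  have "(x, y) \<in> span a b \<longleftrightarrow> (y, x) \<in> span b a" for x y a b
    by (metis converse_iff converse_span)
  then show ?thesis unfolding spans_def by fastforce
qed

lemma fst_image_swap: "fst ` prod.swap ` P = snd ` P" and snd_image_swap: "snd ` prod.swap ` P = fst ` P"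
  by force+

lemma Range_spans_subset: "Range (spans P) \<subseteq> (\<Union>a\<in>fst ` P. RI a)"
proof
  fix y assume "y \<in> Range (spans P)"
  then obtain a b x where "(a, b) \<in> P" "(x, y) \<in> span a b" unfolding spans_def by blast
  moreover from this have "y \<in> RI a" unfolding mem_span mem_right_ideal by (metis (no_types))
  ultimately show "y \<in> (\<Union>a\<in>fst ` P. RI a)" by force
qed

lemma Range_spans_eq:
  assumes "\<forall>(a, b)\<in>P. s a = s b"
  shows "Range (spans P) = (\<Union>a\<in>fst ` P. RI a)"
proof
  show "(\<Union>a\<in>fst ` P. RI a) \<subseteq> Range (spans P)"
  proof
    fix y assume "y \<in> (\<Union>a\<in>fst ` P. RI a)"
    then obtain a b where ab: "(a, b) \<in> P" "y \<in> RI a" by force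
    then obtain z where "z \<in> L" "s a = r z" "y = cmp a z"
      unfolding mem_right_ideal by blast
    moreover have "s a = s b" using assms ab(1) by auto
    ultimately have "(cmp b z, y) \<in> span a b" unfolding mem_span by auto
    with ab(1) show "y \<in> Range (spans P)" unfolding spans_def by blast
  qed
qed (rule Range_spans_subset)

lemma spans_cmp_right:
  assumes "P \<subseteq> L \<times> L" "(x, y) \<in> spans P" "t \<in> L" "r t = s x"
  shows "(cmp x t, cmp y t) \<in> spans P" and "s y = s x"
proof -
  obtain a b where ab: "(a, b) \<in> P" "(x, y) \<in> span a b" using assms(2) unfolding spans_def by blast
  then obtain z where z: "z \<in> L" "r z = s a" "r z = s b" "x = cmp b z" "y = cmp a z"
    unfolding mem_span by blast
  have "a \<in> L" "b \<in> L" using ab(1) assms(1) by auto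
  then have "s x = s z" "s y = s z" using z s_cmp by auto
  then show "s y = s x" by simp
  have zt: "cmp z t \<in> L" "r (cmp z t) = r z"
    using \<open>s x = s z\<close> assms(3,4) z(1) cmp_mem r_cmp by auto
  then have "(cmp b (cmp z t), cmp a (cmp z t)) \<in> span a b"
    unfolding mem_span using z(2,3) by (intro bexI[of _ "cmp z t"]) auto
  moreover have "cmp b (cmp z t) = cmp x t"
    using cmp_assoc[OF \<open>b \<in> L\<close> z(1) assms(3) z(3)[symmetric]] \<open>s x = s z\<close> assms(4) z(4) by simp
  moreover have "cmp a (cmp z t) = cmp y t"
    using cmp_assoc[OF \<open>a \<in> L\<close> z(1) assms(3) z(2)[symmetric]] \<open>s x = s z\<close> assms(4) z(5) by simp
  ultimately show "(cmp x t, cmp y t) \<in> spans P" using ab(1) unfolding spans_def by auto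
qed

definition dense_at :: "'a \<Rightarrow> 'a set \<Rightarrow> bool" where
  "dense_at X A \<longleftrightarrow> (\<forall>e\<in>slice X. RI e \<inter> A \<noteq> {})"

lemma exhaustive_at_iff_dense: "exh_at X B \<longleftrightarrow> B \<subseteq> slice X \<and> dense_at X (\<Union>b\<in>B. RI b)"
  unfolding exhaustive_at_def dense_at_def by blast

lemma dense_Range_pmult:
  assumes "P \<subseteq> L \<times> L" "Q \<subseteq> L \<times> L"
    and "dense_at X (Range (spans P))" "dense_at Y (Range (spans Q))" "Domain (spans P) \<subseteq> slice Y"
  shows "dense_at X (Range (pmult (spans P) (spans Q)))"
  unfolding dense_at_def
proof
  fix e assume e: "e \<in> slice X"
  then obtain x y where x: "x \<in> RI e" and xy: "(y, x) \<in> spans P"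
    using assms(3) unfolding dense_at_def by blast
  then have "y \<in> slice Y" using assms(5) by blast
  then obtain x' z where x': "x' \<in> RI y" and zx': "(z, x') \<in> spans Q"
    using assms(4) unfolding dense_at_def by blast
  then obtain c where c: "c \<in> L" "s y = r c" "x' = cmp y c" unfolding mem_right_ideal by blast
  have "(x', cmp x c) \<in> spans P" using spans_cmp_right(1)[OF assms(1) xy c(1)] c by simp
  with zx' have "(z, cmp x c) \<in> pmult (spans P) (spans Q)" unfolding pmult_def by blast
  moreover have "cmp x c \<in> RI e"
    using cmp_mem_right_ideal[OF x _ c(1)] e spans_cmp_right(2)[OF assms(1) xy c(1)] c(2)
    unfolding obj_slice_def by auto
  ultimately show "RI e \<inter> Range (pmult (spans P) (spans Q)) \<noteq> {}" by blast
qed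

lemma dense_at_mono: "A \<subseteq> B \<Longrightarrow> dense_at X A \<Longrightarrow> dense_at X B"
  unfolding dense_at_def by blast

lemma Domain_spans: "Domain (spans P) = Range (spans (prod.swap ` P))"
  by (metis Range_converse converse_spans)

lemma Range_spans_subset_slice:
  assumes "fst ` P \<subseteq> slice X"
  shows "Range (spans P) \<subseteq> slice X"
proof -
  have "RI a \<subseteq> slice X" if "a \<in> fst ` P" for a
    using right_ideal_subset_slice[of a] assms that unfolding obj_slice_def by auto
  then show ?thesis using Range_spans_subset by blast
qed

lemma Domain_spans_subset_slice: "snd ` P \<subseteq> slice X \<Longrightarrow> Domain (spans P) \<subseteq> slice X"
  unfolding Domain_spans by (rule Range_spans_subset_slice) (simp add: fst_image_swap)

lemma exhaustive_at_subset: "exh_at X B \<Longrightarrow> B \<subseteq> slice X"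
  unfolding exhaustive_at_def by simp

lemma exhaustive_at_if_mem:
  assumes "X \<in> Obj" "B \<subseteq> slice X" "X \<in> B"
  shows "exh_at X B"
  unfolding exhaustive_at_def
proof (intro conjI ballI assms(2))
  fix e assume "e \<in> slice X"
  then have "e \<in> L" "r e = X" unfolding obj_slice_def by auto
  then have "e \<in> RI e" "e \<in> RI X"
    using mem_right_ideal_self cmp_r_left s_Obj[OF assms(1)] unfolding mem_right_ideal by auto
  with assms(3) show "\<exists>b\<in>B. RI e \<inter> RI b \<noteq> {}" by blast
qed

lemma exhaustive_nonempty: "exh B \<Longrightarrow> B \<noteq> {}"
  unfolding exhaustive_def exhaustive_at_def using mem_slice_self by blast

lemma dense_Range_spans:
  "\<forall>(a, b)\<in>P. s a = s b \<Longrightarrow> exh_at X (fst ` P) \<Longrightarrow> dense_at X (Range (spans P))"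
  by (simp add: Range_spans_eq exhaustive_at_iff_dense)

lemma exhaustive_at_if_dense_Range_spans:
  "fst ` P \<subseteq> slice X \<Longrightarrow> dense_at X (Range (spans P)) \<Longrightarrow> exh_at X (fst ` P)"
  unfolding exhaustive_at_iff_dense using dense_at_mono[OF Range_spans_subset] by simp

lemma exhaustive_at_pairs_pmult:
  assumes "P \<subseteq> L \<times> L" "Q \<subseteq> L \<times> L" "\<forall>(a, b)\<in>P. s a = s b" "\<forall>(a, b)\<in>Q. s a = s b"
    and "exh_at X (fst ` P)" "exh_at Y (snd ` P)" "exh_at Y (fst ` Q)" "exh_at Z (snd ` Q)"
  shows "exh_at X (fst ` pairs_pmult P Q)" "exh_at Z (snd ` pairs_pmult P Q)"
proof -
  define P' Q' where "P' = prod.swap ` P" and "Q' = prod.swap ` Q"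
  have swap: "P' \<subseteq> L \<times> L" "Q' \<subseteq> L \<times> L" "\<forall>(a, b)\<in>P'. s a = s b" "\<forall>(a, b)\<in>Q'. s a = s b"
    using assms(1-4) unfolding P'_def Q'_def by auto
  note sub = assms(5-8)[THEN exhaustive_at_subset]
  note R = pairs_pmult_subset[OF assms(1,2) sub(1,4)]
  have "Domain (spans P) \<subseteq> slice Y" using Domain_spans_subset_slice sub(2) .
  then have "dense_at X (Range (pmult (spans P) (spans Q)))"
    using dense_Range_pmult[OF assms(1,2)] dense_Range_spans assms(3-5,7) by blast
  then show "exh_at X (fst ` pairs_pmult P Q)"
    unfolding spans_pmult[OF assms(1,2)] using exhaustive_at_if_dense_Range_spans R(1) by blast
  txt \<open>The domain side is the range side of the converse product.\<close>
  have "Domain (spans Q') \<subseteq> slice Y"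
    unfolding Q'_def by (rule Domain_spans_subset_slice) (simp add: snd_image_swap sub(3))
  moreover have "dense_at Z (Range (spans Q'))" "dense_at Y (Range (spans P'))"
    using dense_Range_spans[OF swap(4)] dense_Range_spans[OF swap(3)] assms(6,8)
    unfolding P'_def Q'_def fst_image_swap by blast+
  ultimately have "dense_at Z (Range (pmult (spans Q') (spans P')))"
    using dense_Range_pmult[OF swap(2,1)] by blast
  moreover have "pmult (spans Q') (spans P') = converse (spans (pairs_pmult P Q))"
    unfolding spans_pmult[OF assms(1,2), symmetric] P'_def Q'_def converse_spans[symmetric] pmult_def
    by (simp add: converse_relcomp)
  ultimately have "dense_at Z (Range (spans (prod.swap ` pairs_pmult P Q)))"
    by (simp add: converse_spans)
  then show "exh_at Z (snd ` pairs_pmult P Q)"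
    using exhaustive_at_if_dense_Range_spans[of "prod.swap ` pairs_pmult P Q"] R(2)
    unfolding fst_image_swap by blast
qed

section \<open>The semigroup \<open>F_Lambda\<close>\<close>

lemma S_Lambda_partial_injective:
  "f \<in> S_Lambda L r s cmp \<Longrightarrow> single_valued f \<and> single_valued (converse f)"
proof (induction rule: S_Lambda.induct)
  case (gen a)
  then show ?case
    unfolding mor_def single_valued_def using cmp_left_cancel by auto
next
  case (mult f g)
  then show ?case by (simp add: pmult_def converse_relcomp single_valued_relcomp)
qed (simp_all add: single_valued_def)

sublocale SL: pinj_inverse_semigroup "S_Lambda L r s cmp"
  by unfold_locales (auto simp: S_Lambda_partial_injective S_Lambda.inv S_Lambda.mult)

abbreviation "Iso \<equiv> S_Iso L r s cmp"

lemma Iso_objects_eq: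
  assumes "spans P \<in> Iso" "spans P \<noteq> {}" "fst ` P \<subseteq> slice X" "snd ` P \<subseteq> slice Y"
  shows "X = Y"
proof -
  have "Domain (spans P) \<inter> Range (spans P) \<noteq> {}"
    using SL.iso_part_Domain_Int_Range assms(1,2) unfolding S_Iso_eq_iso_part .
  moreover have "Range (spans P) \<subseteq> slice X" "Domain (spans P) \<subseteq> slice Y"
    using Range_spans_subset_slice[OF assms(3)] Domain_spans_subset_slice[OF assms(4)] .
  ultimately show ?thesis unfolding obj_slice_def by blast
qed

definition exhaustive_pairs :: "('a \<times> 'a) set \<Rightarrow> bool" where
  "exhaustive_pairs P \<longleftrightarrow> finite P \<and> exh (fst ` P) \<and> exh (snd ` P)"

lemma exhaustive_pairs_subset: "exhaustive_pairs P \<Longrightarrow> P \<subseteq> L \<times> L"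
  unfolding exhaustive_pairs_def exhaustive_def exhaustive_at_def obj_slice_def by force

lemma F_Lambda_eq:
  "F_Lambda L Obj r s cmp = {spans P | P. exhaustive_pairs P \<and> spans P \<in> Iso} \<union> {{}}"
proof (intro equalityI subsetI)
  fix u assume "u \<in> F_Lambda L Obj r s cmp"
  then consider "u = {}" | n al be where "(\<forall>i<n. al i \<in> L \<and> be i \<in> L)"
      "u = (\<Union>i<(n::nat). span (al i) (be i))" "u \<in> Iso"
      "exh (al ` {..<n})" "exh (be ` {..<n})"
    unfolding F_Lambda_def by blast
  then show "u \<in> {spans P | P. exhaustive_pairs P \<and> spans P \<in> Iso} \<union> {{}}"
  proof cases
    case 2
    define P where "P = (\<lambda>i. (al i, be i)) ` {..<n}"
    have "fst ` P = al ` {..<n}" "snd ` P = be ` {..<n}" "spans P = u"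
      unfolding P_def spans_def 2(2) by (simp_all add: image_image)
    moreover have "finite P" unfolding P_def by simp
    ultimately have "exhaustive_pairs P" unfolding exhaustive_pairs_def using 2(4,5) by simp
    with \<open>spans P = u\<close> 2(3) show ?thesis by blast
  qed simp
next
  fix u assume "u \<in> {spans P | P. exhaustive_pairs P \<and> spans P \<in> Iso} \<union> {{}}"
  then consider "u = {}" | P where "exhaustive_pairs P" "spans P \<in> Iso" "u = spans P" by blast
  then show "u \<in> F_Lambda L Obj r s cmp"
  proof cases
    case 2
    then have "P \<noteq> {}" "finite P" using exhaustive_nonempty unfolding exhaustive_pairs_def by auto
    then obtain n f where "P = f ` {i. i < (n::nat)}" using finite_conv_nat_seg_image[THEN iffD1] by blast
    then have P: "P = f ` {..<n}" by (simp add: lessThan_def)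
    then have "n \<ge> 1" using \<open>P \<noteq> {}\<close> by (cases n) auto
    have "fst ` P = (\<lambda>i. fst (f i)) ` {..<n}" "snd ` P = (\<lambda>i. snd (f i)) ` {..<n}"
      "spans P = (\<Union>i<n. span (fst (f i)) (snd (f i)))"
      unfolding P spans_def by (auto simp: image_image split_def)
    moreover have "\<forall>i<n. fst (f i) \<in> L \<and> snd (f i) \<in> L"
      using exhaustive_pairs_subset[OF 2(1)] unfolding P by auto
    ultimately show ?thesis
      using 2 \<open>n \<ge> 1\<close> unfolding F_Lambda_def exhaustive_pairs_def
      by (intro UnI1 CollectI exI[of _ n] exI[of _ "\<lambda>i. fst (f i)"] exI[of _ "\<lambda>i. snd (f i)"]) simp
  qed (simp add: F_Lambda_def)
qed

lemma F_LambdaI: "exhaustive_pairs P \<Longrightarrow> spans P \<in> Iso \<Longrightarrow> spans P \<in> F_Lambda L Obj r s cmp"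
  unfolding F_Lambda_eq by (intro UnI1 CollectI exI[of _ P]) simp

lemma spans_Un: "spans (A \<union> B) = spans A \<union> spans B"
  unfolding spans_def by blast

lemma spans_mem_F_Lambda_by_padding:
  assumes "finite R" "fst ` R \<subseteq> slice X" "snd ` R \<subseteq> slice Z" "X \<in> Obj" "Z \<in> Obj"
    and "spans R \<in> Iso" and "X \<noteq> Z \<or> (\<exists>b\<in>slice X. s b \<noteq> X)"
  shows "spans R \<in> F_Lambda L Obj r s cmp"
proof -
  obtain Pad where Pad: "finite Pad" "fst ` Pad \<subseteq> slice X" "snd ` Pad \<subseteq> slice Z" "spans Pad = {}"
    "X \<in> fst ` Pad" "Z \<in> snd ` Pad"
  proof (cases "X = Z")
    case False
    then have "span X Z = {}" using span_empty s_Obj assms(4,5) by simp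
    then show ?thesis
      using that[of "{(X, Z)}"] mem_slice_self assms(4,5) by (simp add: spans_def)
  next
    case True
    then obtain b where b: "b \<in> slice X" "s b \<noteq> X" using assms(7) by blast
    then have "span X b = {}" "span b X = {}" using span_empty s_Obj[OF assms(4)] by metis+
    then show ?thesis
      using that[of "{(X, b), (b, X)}"] mem_slice_self assms(4) True b(1) by (simp add: spans_def)
  qed
  have "spans (R \<union> Pad) = spans R" using Pad(4) by (simp add: spans_Un)
  moreover have "exh_at X (fst ` (R \<union> Pad))" "exh_at Z (snd ` (R \<union> Pad))"
    using exhaustive_at_if_mem assms(2-5) Pad(2,3,5,6) by (simp_all add: image_Un)
  then have "exhaustive_pairs (R \<union> Pad)"
    unfolding exhaustive_pairs_def exhaustive_def using assms(1,4,5) Pad(1) by auto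
  ultimately show ?thesis using F_LambdaI[of "R \<union> Pad"] assms(6) by simp
qed

lemma exhaustive_pairs_pairs_pmult:
  assumes P: "exhaustive_pairs P" "spans P \<in> Iso" "spans P \<noteq> {}" "exh_at X (fst ` P)"
    and Q: "exhaustive_pairs Q" "spans Q \<in> Iso" "spans Q \<noteq> {}" "exh_at X (snd ` Q)"
    and "X \<in> Obj" and sources: "\<forall>b\<in>slice X. s b = X"
  shows "exhaustive_pairs (pairs_pmult P Q)"
proof -
  obtain Y Y' where Y: "exh_at Y (snd ` P)" and Y': "exh_at Y' (fst ` Q)"
    using P(1) Q(1) unfolding exhaustive_pairs_def exhaustive_def by blast
  note PL = exhaustive_pairs_subset[OF P(1)] and QL = exhaustive_pairs_subset[OF Q(1)]
  have XY: "X = Y"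
    using Iso_objects_eq[OF P(2,3) exhaustive_at_subset[OF P(4)] exhaustive_at_subset[OF Y]] .
  have YX: "Y' = X"
    using Iso_objects_eq[OF Q(2,3) exhaustive_at_subset[OF Y'] exhaustive_at_subset[OF Q(4)]] .
  have "fst ` P \<subseteq> slice X" "snd ` P \<subseteq> slice X" "fst ` Q \<subseteq> slice X" "snd ` Q \<subseteq> slice X"
    using P(4) Q(4) Y Y' unfolding XY[symmetric] YX by (simp_all add: exhaustive_at_subset)
  then have "\<forall>(a, b)\<in>P. s a = s b" "\<forall>(a, b)\<in>Q. s a = s b"
    using sources by (metis (mono_tags, lifting) case_prodI2 fst_conv image_subset_iff snd_conv)+
  then have "exh_at X (fst ` pairs_pmult P Q)" "exh_at X (snd ` pairs_pmult P Q)"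
    using exhaustive_at_pairs_pmult[OF PL QL _ _ P(4) _ _ Q(4)] Y Y' unfolding XY[symmetric] YX
    by blast+
  moreover have "finite (pairs_pmult P Q)"
    using finite_pairs_pmult[OF _ _ PL QL] P(1) Q(1) unfolding exhaustive_pairs_def by blast
  ultimately show ?thesis unfolding exhaustive_pairs_def exhaustive_def using \<open>X \<in> Obj\<close> by auto
qed

lemma F_Lambda_cases:
  assumes "u \<in> F_Lambda L Obj r s cmp"
  obtains "u = {}" | P where "exhaustive_pairs P" "spans P \<in> Iso" "u = spans P"
  using assms unfolding F_Lambda_eq by blast

lemma F_Lambda_subset_Iso: "F_Lambda L Obj r s cmp \<subseteq> Iso"
  using SL.empty_in_iso_part[OF S_Lambda.zero] unfolding S_Iso_eq_iso_part[symmetric]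
  by (auto elim: F_Lambda_cases)

lemma F_Lambda_converse:
  assumes "u \<in> F_Lambda L Obj r s cmp"
  shows "converse u \<in> F_Lambda L Obj r s cmp"
  using assms
proof (cases rule: F_Lambda_cases)
  case 1
  then show ?thesis unfolding F_Lambda_eq by simp
next
  case (2 P)
  then have "exhaustive_pairs (prod.swap ` P)"
    unfolding exhaustive_pairs_def by (simp add: fst_image_swap snd_image_swap)
  moreover have "spans (prod.swap ` P) \<in> Iso"
    using SL.iso_part_converse 2(2) unfolding S_Iso_eq_iso_part converse_spans[symmetric] by blast
  ultimately show ?thesis unfolding 2(3) converse_spans by (rule F_LambdaI)
qed

lemma F_Lambda_pmult:
  assumes "u \<in> F_Lambda L Obj r s cmp" "v \<in> F_Lambda L Obj r s cmp"
  shows "pmult u v \<in> F_Lambda L Obj r s cmp"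
proof (cases "u = {} \<or> v = {}")
  case True
  then have "pmult u v = {}" unfolding pmult_def by auto
  then show ?thesis unfolding F_Lambda_eq by simp
next
  case False
  then have nonempty: "u \<noteq> {}" "v \<noteq> {}" by auto
  obtain P where P: "exhaustive_pairs P" "spans P \<in> Iso" "u = spans P"
    using F_Lambda_cases[OF assms(1)] nonempty(1) by metis
  obtain Q where Q: "exhaustive_pairs Q" "spans Q \<in> Iso" "v = spans Q"
    using F_Lambda_cases[OF assms(2)] nonempty(2) by metis
  obtain X Z where X: "X \<in> Obj" "exh_at X (fst ` P)" and Z: "Z \<in> Obj" "exh_at Z (snd ` Q)"
    using P(1) Q(1) unfolding exhaustive_pairs_def exhaustive_def by blast
  note PL = exhaustive_pairs_subset[OF P(1)] and QL = exhaustive_pairs_subset[OF Q(1)]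
  have uv: "pmult u v = spans (pairs_pmult P Q)" unfolding P(3) Q(3) by (rule spans_pmult[OF PL QL])
  have iso: "spans (pairs_pmult P Q) \<in> Iso"
    using SL.iso_part_pmult P(2) Q(2) unfolding S_Iso_eq_iso_part uv[symmetric] P(3) Q(3) .
  show ?thesis
  proof (cases "X \<noteq> Z \<or> (\<exists>b\<in>slice X. s b \<noteq> X)")
    case True
    have "finite (pairs_pmult P Q)"
      using P(1) Q(1) unfolding exhaustive_pairs_def by (simp add: finite_pairs_pmult[OF _ _ PL QL])
    from spans_mem_F_Lambda_by_padding[OF this
        pairs_pmult_subset[OF PL QL exhaustive_at_subset[OF X(2)] exhaustive_at_subset[OF Z(2)]]
        X(1) Z(1) iso True]
    show ?thesis unfolding uv .
  next
    case False
    then have "Z = X" "\<forall>b\<in>slice X. s b = X" by auto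
    have "spans P \<noteq> {}" "spans Q \<noteq> {}" using nonempty P(3) Q(3) by auto
    from exhaustive_pairs_pairs_pmult[OF P(1,2) this(1) X(2) Q(1,2) this(2) _ X(1)]
    have "exhaustive_pairs (pairs_pmult P Q)" using Z(2) \<open>Z = X\<close> \<open>\<forall>b\<in>slice X. s b = X\<close> by simp
    then show ?thesis unfolding uv using iso by (rule F_LambdaI)
  qed
qed

end

theorem lemma4p8:
  fixes L Obj :: "'a set" and r s :: "'a \<Rightarrow> 'a" and cmp :: "'a \<Rightarrow> 'a \<Rightarrow> 'a"
  assumes "small_category L Obj r s cmp"
    and "left_cancellative L r s cmp"
    and "finitely_aligned L r s cmp"
  shows "inverse_subsemigroup (F_Lambda L Obj r s cmp) (S_Iso L r s cmp)"
proof -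
  interpret finitely_aligned_lc_category L Obj r s cmp using assms by unfold_locales
  show ?thesis
    unfolding inverse_subsemigroup_def using F_Lambda_subset_Iso F_Lambda_pmult F_Lambda_converse by blast
qed

end
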